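(* Let $K\ge 1$, and for each class $k\in\{1,\dots,K\}$ let $\lambda_k>0$, $\mu_k>0$ and $\theta_k\ge 0$. Consider the continuous-time Markov process $\mathbf{N}(t)=(N_1(t),\dots,N_K(t))$ on $\mathbb{N}^K$ whose only transitions from a state $\mathbf{n}=(n_1,\dots,n_K)$ are: to $\mathbf{n}+\mathbf{e}_k$ at rate $\lambda_k$, and, if $n_k>0$, to $\mathbf{n}-\mathbf{e}_k$ at rate $n_k\mu_k/L(\mathbf{n})+n_k\theta_k$, where $\mathbf{e}_k$ is the $k$-th unit vector and $L(\mathbf{n})=\sum_{j=1}^K n_j$. Let $\rho_k=\lambda_k/\mu_k$ and let $S=\{k:\theta_k=0\}$ be the set of static classes. Then $\mathbf{N}(t)$ has a stationary regime (i.e., is positive recurrent / ergodic) if and only if $$\rho_S:=\sum_{k\in S}\rho_k<1.$$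
   Context: This is the flow-level model of a single cell of capacity $C$ shared equally (processor sharing) among active users, with class-$k$ users arriving as a Poisson process of rate $\lambda_k$, having exponentially distributed data volumes of mean $\sigma_k$ (so $\mu_k=C/\sigma_k$), and, for mobile classes ($\theta_k>0$), leaving the cell before service completion after an exponential residual sojourn time of rate $\theta_k$ (processor-sharing queue with impatience). A class with $\theta_k=0$ is called static. If $S$ is empty, the sum $\rho_S$ is $0$. *)

theory Defs
  imports "HOL-Analysis.Analysis"
begin

definition exit_rate :: "'s set \<Rightarrow> ('s \<Rightarrow> 's \<Rightarrow> real) \<Rightarrow> 's \<Rightarrow> real" where
  "exit_rate S q n = infsum (\<lambda>m. q n m) (S - {n})"

definition stationary_distribution ::
  "'s set \<Rightarrow> ('s \<Rightarrow> 's \<Rightarrow> real) \<Rightarrow> ('s \<Rightarrow> real) \<Rightarrow> bool" where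
  "stationary_distribution S q p \<longleftrightarrow>
     (\<forall>n\<in>S. p n \<ge> 0) \<and> (p has_sum 1) S \<and>
     (\<forall>m\<in>S. ((\<lambda>n. p n * q n m) has_sum (p m * exit_rate S q m)) (S - {m}))"

definition has_stationary_regime :: "'s set \<Rightarrow> ('s \<Rightarrow> 's \<Rightarrow> real) \<Rightarrow> bool" where
  "has_stationary_regime S q \<longleftrightarrow> (\<exists>p. stationary_distribution S q p)"

(* State space N^K: vectors indexed by classes 0..K-1, zero outside. *)
definition states :: "nat \<Rightarrow> (nat \<Rightarrow> nat) set" where
  "states K = {n. \<forall>k\<ge>K. n k = 0}"

definition load :: "nat \<Rightarrow> (nat \<Rightarrow> nat) \<Rightarrow> nat" where
  "load K n = (\<Sum>j<K. n j)"

definition ps_rate :: "nat \<Rightarrow> (nat \<Rightarrow> real) \<Rightarrow> (nat \<Rightarrow> real) \<Rightarrow> (nat \<Rightarrow> real)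
    \<Rightarrow> (nat \<Rightarrow> nat) \<Rightarrow> (nat \<Rightarrow> nat) \<Rightarrow> real" where
  "ps_rate K lam mu th n m =
     (\<Sum>k<K. (if m = n(k := n k + 1) then lam k else 0)
          + (if n k > 0 \<and> m = n(k := n k - 1)
             then real (n k) * mu k / real (load K n) + real (n k) * th k else 0))"

end

theory Submission
  imports Defs "HOL-Library.Diagonal_Subsequence" "HOL-Analysis.Harmonic_Numbers"
begin

(* Necessity: summing the balance equations of a stationary distribution p against the static
   workload f(n) = (sum of n_k / mu_k over static k), cut off above load M, gives
   sum_n p(n) (Q f_M)(n) = 0.  Below load M the drift (Q f_M)(n) is rho_S minus the fraction of the
   capacity serving static users, so it is nonnegative if rho_S >= 1, and at least 1 in the empty
   state; only the states of load M contribute a negative term, of order M.  Hence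
   p(0) <= c M P(L = M), and since p(0) > 0 the level probabilities dominate a multiple of the
   harmonic series, contradicting total mass 1.

   Sufficiency: the static workload plus w times the number of mobile users is a Lyapunov
   function.  With many mobile users their abandonments make its drift very negative; with few
   mobile users but a large load, the static users receive almost all the capacity and the drift is
   close to rho_S - 1 < 0.  As the rates are unbounded, the chain is uniformised with a
   state-dependent rate c(n).  The Cesaro averages of the uniformised chain started empty then keep
   a fixed positive mass on a finite set of states, a pointwise limit point of them is an invariant
   measure nu of the uniformised chain, and nu / c, normalised, is a stationary distribution. *)

section \<open>Harmonic minorants and diagonal subsequences\<close>

lemma harmonic_minorant_sum_unbounded:
  fixes f :: "nat \<Rightarrow> real"
  assumes a: "0 < a" and f: "\<And>M. 1 \<le> M \<Longrightarrow> a / real M \<le> f M"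
  shows "\<exists>N. B < (\<Sum>M=1..N. f M)"
proof -
  have "\<forall>\<^sub>F N in sequentially. B / a < harm N"
    using harm_at_top by (simp add: filterlim_at_top_dense)
  then obtain N where N: "B / a < harm N"
    by (auto simp: eventually_sequentially)
  have "a * harm N = (\<Sum>M=1..N. a / real M)"
    by (simp add: harm_def sum_distrib_left divide_inverse)
  also have "\<dots> \<le> (\<Sum>M=1..N. f M)"
    by (intro sum_mono f) auto
  finally have "a * harm N \<le> (\<Sum>M=1..N. f M)" .
  moreover have "B < a * harm N"
    using N a by (simp add: pos_divide_less_eq mult.commute)
  ultimately show ?thesis
    by (intro exI[of _ N]) linarith
qed

lemma diagonal_subseq_convergent:
  fixes x :: "nat \<Rightarrow> nat \<Rightarrow> real"
  assumes bounded: "\<And>i j. x i j \<in> {a..b}"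
  shows "\<exists>r. strict_mono r \<and> (\<forall>j. convergent (\<lambda>i. x (r i) j))"
proof -
  interpret subseqs "\<lambda>j s. convergent (\<lambda>i. x (s i) j)"
  proof
    fix j and s :: "nat \<Rightarrow> nat"
    have "seq_compact {a..b}"
      by (rule compact_imp_seq_compact[OF compact_Icc])
    then obtain l r where "strict_mono r" "((\<lambda>i. x (s i) j) \<circ> r) \<longlonglongrightarrow> l"
      using bounded unfolding seq_compact_def by metis
    then show "\<exists>r. strict_mono r \<and> convergent (\<lambda>i. x ((s \<circ> r) i) j)"
      by (auto simp: convergent_def o_def)
  qed
  have "convergent (\<lambda>i. x (diagseq i) j)" for j
  proof -
    have "convergent (\<lambda>i. x ((diagseq \<circ> (+) (Suc j)) i) j)"
    proof (rule diagseq_holds)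
      fix r s n assume "strict_mono (r :: nat \<Rightarrow> nat)" "convergent (\<lambda>i. x (s i) n)"
      then show "convergent (\<lambda>i. x ((s \<circ> r) i) n)"
        by (auto simp: convergent_def o_def intro: LIMSEQ_subseq_LIMSEQ[unfolded o_def])
    qed
    then show ?thesis
      using convergent_ignore_initial_segment[of "\<lambda>i. x (diagseq i) j" "Suc j"] by (simp add: o_def add.commute)
  qed
  then show ?thesis
    using subseq_diagseq by blast
qed

section \<open>The state space\<close>

abbreviation incr :: "(nat \<Rightarrow> nat) \<Rightarrow> nat \<Rightarrow> nat \<Rightarrow> nat" where
  "incr n k \<equiv> n(k := n k + 1)"

abbreviation decr :: "(nat \<Rightarrow> nat) \<Rightarrow> nat \<Rightarrow> nat \<Rightarrow> nat" where
  "decr n k \<equiv> n(k := n k - 1)"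

definition states_upto :: "nat \<Rightarrow> nat \<Rightarrow> (nat \<Rightarrow> nat) set" where
  "states_upto K j = {n \<in> states K. load K n \<le> j}"

definition level :: "nat \<Rightarrow> nat \<Rightarrow> (nat \<Rightarrow> nat) set" where
  "level K j = {n \<in> states K. load K n = j}"

lemma member_le_load: "k < K \<Longrightarrow> n k \<le> load K n"
  unfolding load_def by (rule member_le_sum) auto

lemma load_incr:
  assumes "k < K"
  shows "load K (incr n k) = load K n + 1"
proof -
  have "(\<Sum>j\<in>{..<K} - {k}. (incr n k) j) = (\<Sum>j\<in>{..<K} - {k}. n j)"
    by (intro sum.cong) auto
  then show ?thesis
    using assms by (simp add: load_def sum.remove[of "{..<K}" k])
qed

lemma load_decr: "k < K \<Longrightarrow> 0 < n k \<Longrightarrow> load K (decr n k) + 1 = load K n"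
  using load_incr[of k K "decr n k"] by simp

lemma states_fun_upd: "n \<in> states K \<Longrightarrow> k < K \<Longrightarrow> n(k := v) \<in> states K"
  by (auto simp: states_def)

lemma load_eq_0_iff: "n \<in> states K \<Longrightarrow> load K n = 0 \<longleftrightarrow> n = (\<lambda>_. 0)"
  unfolding load_def states_def by (auto simp: fun_eq_iff) (metis lessThan_iff not_le)

lemma load_pos_iff: "0 < load K n \<longleftrightarrow> (\<exists>k<K. 0 < n k)"
  by (auto simp: load_def simp flip: neq0_conv)

lemma states_upto_mono: "i \<le> j \<Longrightarrow> states_upto K i \<subseteq> states_upto K j"
  by (auto simp: states_upto_def)

lemma zero_in_states_upto: "(\<lambda>_. 0) \<in> states_upto K j"
  by (simp add: states_upto_def states_def load_def)

lemma incr_in_states_upto: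
  "n \<in> states K \<Longrightarrow> k < K \<Longrightarrow> load K n < j \<Longrightarrow> incr n k \<in> states_upto K j"
  using load_incr[of k K n] by (simp add: states_upto_def states_fun_upd)

lemma decr_in_states_upto:
  "n \<in> states K \<Longrightarrow> k < K \<Longrightarrow> 0 < n k \<Longrightarrow> load K n \<le> j + 1 \<Longrightarrow> decr n k \<in> states_upto K j"
  using load_decr[of k K n] by (simp add: states_upto_def states_fun_upd)

lemma finite_states_upto: "finite (states_upto K j)"
proof (rule finite_subset)
  show "states_upto K j \<subseteq> {n. \<forall>k. (k \<in> {..<K} \<longrightarrow> n k \<in> {..j}) \<and> (k \<notin> {..<K} \<longrightarrow> n k = 0)}"
    using member_le_load order_trans by (auto simp: states_upto_def states_def) blast
qed (intro finite_set_of_finite_funs; simp)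

lemma level_subset_states_upto: "level K j \<subseteq> states_upto K j"
  by (auto simp: level_def states_upto_def)

lemma finite_level: "finite (level K j)"
  using finite_subset[OF level_subset_states_upto finite_states_upto] .

lemma countable_states: "countable (states K)"
proof (rule countable_image_inj_on)
  show "countable ((\<lambda>n. map n [0..<K]) ` states K)" by simp
  show "inj_on (\<lambda>n. map n [0..<K]) (states K)"
  proof (rule inj_onI)
    fix x y assume "x \<in> states K" "y \<in> states K" "map x [0..<K] = map y [0..<K]"
    then show "x = y"
      by (auto simp: fun_eq_iff states_def map_eq_conv)
  qed
qed

lemma summable_on_states_if_bounded:
  fixes g :: "(nat \<Rightarrow> nat) \<Rightarrow> real"
  assumes nonneg: "\<And>n. n \<in> states K \<Longrightarrow> 0 \<le> g n"
    and bounded: "\<And>j. (\<Sum>n\<in>states_upto K j. g n) \<le> B"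
  shows "g summable_on states K"
proof (rule nonneg_bdd_above_summable_on)
  show "bdd_above (sum g ` {F. F \<subseteq> states K \<and> finite F})"
  proof (rule bdd_aboveI2)
    fix F assume F: "F \<in> {F. F \<subseteq> states K \<and> finite F}"
    then have "F \<subseteq> states_upto K (\<Sum>n\<in>F. load K n)"
      by (auto simp: states_upto_def intro: member_le_sum)
    then have "sum g F \<le> (\<Sum>n\<in>states_upto K (\<Sum>n\<in>F. load K n). g n)"
      using nonneg by (intro sum_mono2 finite_states_upto) (auto simp: states_upto_def)
    also have "\<dots> \<le> B"
      by (rule bounded)
    finally show "sum g F \<le> B" .
  qed
qed (rule nonneg)

definition weighted_load :: "nat \<Rightarrow> (nat \<Rightarrow> real) \<Rightarrow> (nat \<Rightarrow> nat) \<Rightarrow> real" where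
  "weighted_load K w n = (\<Sum>k<K. w k * real (n k))"

lemma weighted_load_fun_upd:
  assumes "k < K"
  shows "weighted_load K w (n(k := v)) = weighted_load K w n + w k * (real v - real (n k))"
proof -
  have "(\<Sum>j\<in>{..<K} - {k}. w j * real ((n(k := v)) j)) = (\<Sum>j\<in>{..<K} - {k}. w j * real (n j))"
    by (intro sum.cong) auto
  then show ?thesis
    using assms by (simp add: weighted_load_def sum.remove[of "{..<K}" k] algebra_simps)
qed

lemma weighted_load_nonneg: "(\<And>k. k < K \<Longrightarrow> 0 \<le> w k) \<Longrightarrow> 0 \<le> weighted_load K w n"
  unfolding weighted_load_def by (intro sum_nonneg) simp

lemma weighted_load_le:
  assumes "\<And>k. k < K \<Longrightarrow> 0 \<le> w k"
  shows "weighted_load K w n \<le> (\<Sum>k<K. w k) * real (load K n)"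
  unfolding weighted_load_def sum_distrib_right
  using assms member_le_load by (intro sum_mono mult_left_mono) auto

section \<open>Rates, generator and balance equations\<close>

locale ps_queue =
  fixes K :: nat and lam mu th :: "nat \<Rightarrow> real"
  assumes lam_nonneg: "\<And>k. k < K \<Longrightarrow> 0 \<le> lam k"
    and mu_pos: "\<And>k. k < K \<Longrightarrow> 0 < mu k"
    and th_nonneg: "\<And>k. k < K \<Longrightarrow> 0 \<le> th k"
begin

abbreviation rate :: "(nat \<Rightarrow> nat) \<Rightarrow> (nat \<Rightarrow> nat) \<Rightarrow> real" where
  "rate \<equiv> ps_rate K lam mu th"

definition dep_rate :: "(nat \<Rightarrow> nat) \<Rightarrow> nat \<Rightarrow> real" where
  "dep_rate n k = real (n k) * mu k / real (load K n) + real (n k) * th k"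

definition out_rate :: "(nat \<Rightarrow> nat) \<Rightarrow> real" where
  "out_rate n = (\<Sum>k<K. lam k + (if 0 < n k then dep_rate n k else 0))"

definition generator :: "((nat \<Rightarrow> nat) \<Rightarrow> real) \<Rightarrow> (nat \<Rightarrow> nat) \<Rightarrow> real" where
  "generator g n = (\<Sum>k<K. lam k * (g (incr n k) - g n)
      + (if 0 < n k then dep_rate n k * (g (decr n k) - g n) else 0))"

lemma dep_rate_nonneg: "k < K \<Longrightarrow> 0 \<le> dep_rate n k"
  unfolding dep_rate_def using mu_pos[of k] th_nonneg[of k] by simp

lemma dep_rate_pos: "k < K \<Longrightarrow> 0 < n k \<Longrightarrow> 0 < dep_rate n k"
  unfolding dep_rate_def using member_le_load[of k K n] mu_pos[of k] th_nonneg[of k]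
  by (intro add_pos_nonneg) auto

lemma dep_rate_ge: "k < K \<Longrightarrow> real (n k) * th k \<le> dep_rate n k"
  unfolding dep_rate_def using mu_pos[of k] by simp

lemma dep_rate_le: "k < K \<Longrightarrow> dep_rate n k \<le> mu k + real (n k) * th k"
  unfolding dep_rate_def using member_le_load[of k K n] mu_pos[of k]
  by (simp add: divide_le_eq mult_right_mono)

lemma rate_eq: "rate n m = (\<Sum>k<K. (if m = incr n k then lam k else 0)
    + (if 0 < n k \<and> m = decr n k then dep_rate n k else 0))"
  unfolding ps_rate_def dep_rate_def ..

lemma rate_nonneg: "0 \<le> rate n m"
  unfolding rate_eq using lam_nonneg dep_rate_nonneg by (intro sum_nonneg) auto

lemma rate_self: "rate n n = 0"
  unfolding rate_eq by (intro sum.neutral ballI) (auto simp: fun_eq_iff split: if_splits)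

lemma rate_neq_0_imp:
  assumes "rate n m \<noteq> 0"
  shows "\<exists>k<K. m = incr n k \<or> 0 < n k \<and> m = decr n k"
proof (rule ccontr)
  assume "\<not> ?thesis"
  then have "rate n m = 0"
    unfolding rate_eq by (intro sum.neutral) auto
  with assms show False ..
qed

lemma rate_neq_0_load:
  assumes "n \<in> states K" "rate n m \<noteq> 0"
  shows "m \<in> states K \<and> (load K m = load K n + 1 \<or> load K m + 1 = load K n)"
  using rate_neq_0_imp[OF assms(2)] load_incr load_decr states_fun_upd[OF assms(1)] by metis

lemma dep_rate_le_rate: "k < K \<Longrightarrow> 0 < n k \<Longrightarrow> dep_rate n k \<le> rate n (decr n k)"
  unfolding rate_eq using lam_nonneg dep_rate_nonneg
  by (intro order_trans[OF _ member_le_sum[of k]]) auto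

lemma sum_rate:
  assumes "finite X" "\<And>k. k < K \<Longrightarrow> incr n k \<in> X"
    "\<And>k. k < K \<Longrightarrow> 0 < n k \<Longrightarrow> decr n k \<in> X"
  shows "(\<Sum>m\<in>X. rate n m * g m) = generator g n + g n * out_rate n"
proof -
  have "(\<Sum>m\<in>X. rate n m * g m) = (\<Sum>k<K. \<Sum>m\<in>X. (if m = incr n k then lam k * g m else 0)
      + (if 0 < n k \<and> m = decr n k then dep_rate n k * g m else 0))"
    unfolding rate_eq sum_distrib_right by (subst sum.swap) (auto intro!: sum.cong simp: distrib_right)
  also have "\<dots> = (\<Sum>k<K. lam k * g (incr n k) + (if 0 < n k then dep_rate n k * g (decr n k) else 0))"
    using assms by (intro sum.cong) (auto simp: sum.distrib sum.delta' distrib_right simp del: fun_upd_apply)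
  also have "\<dots> = generator g n + g n * out_rate n"
    unfolding generator_def out_rate_def sum_distrib_left sum.distrib[symmetric]
    by (intro sum.cong) (auto simp: algebra_simps)
  finally show ?thesis .
qed

lemma sum_rate_states_upto:
  "n \<in> states K \<Longrightarrow> load K n < j \<Longrightarrow>
    (\<Sum>m\<in>states_upto K j. rate n m * g m) = generator g n + g n * out_rate n"
  by (intro sum_rate finite_states_upto incr_in_states_upto decr_in_states_upto) auto

lemma generator_const: "generator (\<lambda>_. c) n = 0"
  unfolding generator_def by (simp cong: if_cong)

lemma exit_rate_eq_out_rate:
  assumes n: "n \<in> states K"
  shows "exit_rate (states K) rate n = out_rate n"
proof -
  let ?X = "states_upto K (load K n + 1)"
  have "(rate n has_sum (\<Sum>m\<in>?X - {n}. rate n m)) (states K - {n})"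
  proof (rule has_sum_finite_neutralI)
    show "finite (?X - {n})" "?X - {n} \<subseteq> states K - {n}"
      using finite_states_upto by (auto simp: states_upto_def)
    show "rate n m = 0" if "m \<in> states K - {n} - (?X - {n})" for m
      using that rate_neq_0_load[OF n, of m] by (auto simp: states_upto_def)
  qed simp
  moreover have "(\<Sum>m\<in>?X - {n}. rate n m) = (\<Sum>m\<in>?X. rate n m * 1)"
    by (simp add: sum_diff1 rate_self finite_states_upto)
  ultimately show ?thesis
    using sum_rate_states_upto[OF n, of "load K n + 1" "\<lambda>_. 1"]
    unfolding exit_rate_def generator_const by (simp add: infsumI)
qed

lemma has_sum_rate_column:
  assumes m: "m \<in> states K"
  shows "((\<lambda>n. p n * rate n m) has_sum (\<Sum>n\<in>states_upto K (load K m + 1). p n * rate n m))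
    (states K - {m})"
proof -
  let ?X = "states_upto K (load K m + 1)"
  have "((\<lambda>n. p n * rate n m) has_sum (\<Sum>n\<in>?X - {m}. p n * rate n m)) (states K - {m})"
  proof (rule has_sum_finite_neutralI)
    show "finite (?X - {m})" "?X - {m} \<subseteq> states K - {m}"
      using finite_states_upto by (auto simp: states_upto_def)
    show "p n * rate n m = 0" if "n \<in> states K - {m} - (?X - {m})" for n
      using that rate_neq_0_load[of n m] by (auto simp: states_upto_def)
  qed simp
  moreover have "m \<in> ?X"
    using m by (simp add: states_upto_def)
  ultimately show ?thesis
    by (simp add: sum_diff1 rate_self finite_states_upto)
qed

lemma stationary_distribution_iff:
  "stationary_distribution (states K) rate p \<longleftrightarrow>
     (\<forall>n\<in>states K. 0 \<le> p n) \<and> (p has_sum 1) (states K) \<and>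
     (\<forall>m\<in>states K. p m * out_rate m = (\<Sum>n\<in>states_upto K (load K m + 1). p n * rate n m))"
proof -
  have "((\<lambda>n. p n * rate n m) has_sum (p m * exit_rate (states K) rate m)) (states K - {m}) \<longleftrightarrow>
      p m * out_rate m = (\<Sum>n\<in>states_upto K (load K m + 1). p n * rate n m)"
    if m: "m \<in> states K" for m
  proof
    assume "((\<lambda>n. p n * rate n m) has_sum (p m * exit_rate (states K) rate m)) (states K - {m})"
    from has_sum_unique[OF this has_sum_rate_column[OF m]]
    show "p m * out_rate m = (\<Sum>n\<in>states_upto K (load K m + 1). p n * rate n m)"
      using exit_rate_eq_out_rate[OF m] by simp
  qed (use has_sum_rate_column[OF m] exit_rate_eq_out_rate[OF m] in simp)
  then show ?thesis
    unfolding stationary_distribution_def by auto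
qed

lemma generator_weighted_load:
  "generator (weighted_load K w) n
     = (\<Sum>k<K. lam k * w k) - (\<Sum>k<K. if 0 < n k then dep_rate n k * w k else 0)"
proof -
  have "generator (weighted_load K w) n
      = (\<Sum>k<K. lam k * w k - (if 0 < n k then dep_rate n k * w k else 0))"
    unfolding generator_def by (intro sum.cong) (auto simp: weighted_load_fun_upd of_nat_diff)
  then show ?thesis
    by (simp add: sum_subtractf)
qed

lemma generator_weighted_load_le:
  assumes "\<And>k. k < K \<Longrightarrow> 0 \<le> w k"
  shows "generator (weighted_load K w) n \<le> (\<Sum>k<K. lam k * w k)"
proof -
  have "0 \<le> (\<Sum>k<K. if 0 < n k then dep_rate n k * w k else 0)"
    using dep_rate_nonneg assms by (intro sum_nonneg) auto
  then show ?thesis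
    unfolding generator_weighted_load by simp
qed

lemma generator_nonneg_if_zero:
  assumes "\<And>m. 0 \<le> g m" and "g n = 0"
  shows "0 \<le> generator g n"
  unfolding generator_def using assms lam_nonneg dep_rate_nonneg
  by (intro sum_nonneg add_nonneg_nonneg) auto

lemma generator_local:
  assumes n: "n \<in> states K" "load K n < j" and gh: "\<forall>m\<in>states_upto K j. g m = h m"
  shows "generator g n = generator h n"
proof -
  have "g (incr n k) = h (incr n k)" if "k < K" for k
    using gh incr_in_states_upto[OF n(1) that n(2)] by blast
  moreover have "g (decr n k) = h (decr n k)" if "k < K" "0 < n k" for k
    using gh decr_in_states_upto[OF n(1) that] n(2) by simp
  moreover have "g n = h n"
    using gh n by (simp add: states_upto_def)
  ultimately show ?thesis
    unfolding generator_def by (intro sum.cong refl) auto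
qed

section \<open>Necessity of the stability condition\<close>

lemma stationary_eq_0_if_decr:
  assumes p: "stationary_distribution (states K) rate p"
    and n: "n \<in> states K" and k: "k < K" "0 < n k" and zero: "p (decr n k) = 0"
  shows "p n = 0"
proof -
  let ?m = "decr n k"
  have p_nonneg: "\<And>n. n \<in> states K \<Longrightarrow> 0 \<le> p n"
    and balance: "p ?m * out_rate ?m = (\<Sum>n'\<in>states_upto K (load K ?m + 1). p n' * rate n' ?m)"
    using p states_fun_upd[OF n k(1)] by (auto simp: stationary_distribution_iff)
  have "p n * rate n ?m \<le> (\<Sum>n'\<in>states_upto K (load K ?m + 1). p n' * rate n' ?m)"
    using n load_decr[of k K n, OF k] p_nonneg rate_nonneg finite_states_upto
    by (intro member_le_sum) (auto simp: states_upto_def)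
  then have "p n * rate n ?m \<le> 0"
    using balance zero by simp
  moreover have "0 < rate n ?m"
    using k by (intro less_le_trans[OF dep_rate_pos dep_rate_le_rate])
  ultimately show ?thesis
    using p_nonneg[OF n] by (simp add: mult_le_0_iff)
qed

lemma stationary_pos_at_zero:
  assumes p: "stationary_distribution (states K) rate p"
  shows "0 < p (\<lambda>_. 0)"
proof (rule ccontr)
  have p_nonneg: "\<And>n. n \<in> states K \<Longrightarrow> 0 \<le> p n" and p_sum: "(p has_sum 1) (states K)"
    using p by (auto simp: stationary_distribution_iff)
  assume "\<not> 0 < p (\<lambda>_. 0)"
  then have p_zero: "p (\<lambda>_. 0) = 0"
    using p_nonneg[of "\<lambda>_. 0"] by (force simp: states_def)
  have "\<forall>n\<in>level K l. p n = 0" for l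
  proof (induction l)
    case 0
    then show ?case
      using p_zero load_eq_0_iff by (auto simp: level_def)
  next
    case (Suc l)
    show ?case
    proof
      fix n assume n: "n \<in> level K (Suc l)"
      then obtain k where k: "k < K" "0 < n k"
        using load_pos_iff[of K n] by (auto simp: level_def)
      then have "decr n k \<in> level K l"
        using n load_decr[of k K n] by (auto simp: level_def states_fun_upd)
      then show "p n = 0"
        using n k p Suc.IH stationary_eq_0_if_decr[of p n k] by (auto simp: level_def)
    qed
  qed
  then have "(p has_sum 0) (states K)"
    by (intro has_sum_0) (auto simp: level_def)
  with p_sum show False
    using has_sum_unique by fastforce
qed

lemma stationary_balance_states_upto:
  assumes p: "stationary_distribution (states K) rate p" and m: "m \<in> states K" "load K m < j"
  shows "p m * out_rate m = (\<Sum>n\<in>states_upto K j. p n * rate n m)"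
proof -
  have "p m * out_rate m = (\<Sum>n\<in>states_upto K (load K m + 1). p n * rate n m)"
    using p m by (simp add: stationary_distribution_iff)
  also have "\<dots> = (\<Sum>n\<in>states_upto K j. p n * rate n m)"
  proof (rule sum.mono_neutral_left[OF finite_states_upto])
    show "states_upto K (load K m + 1) \<subseteq> states_upto K j"
      using m by (intro states_upto_mono) simp
    show "\<forall>n\<in>states_upto K j - states_upto K (load K m + 1). p n * rate n m = 0"
      using rate_neq_0_load by (fastforce simp: states_upto_def)
  qed
  finally show ?thesis .
qed

lemma stationary_sum_generator:
  assumes p: "stationary_distribution (states K) rate p"
    and h: "\<And>m. m \<notin> states_upto K M \<Longrightarrow> h m = 0"
  shows "(\<Sum>n\<in>states_upto K (M + 1). p n * generator h n) = 0"
proof -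
  let ?B = "states_upto K"
  have balance: "p m * out_rate m = (\<Sum>n\<in>?B (M + 1). p n * rate n m)" if "m \<in> ?B M" for m
    using that by (intro stationary_balance_states_upto[OF p]) (auto simp: states_upto_def)
  have row: "(\<Sum>m\<in>?B M. rate n m * h m) = generator h n + h n * out_rate n"
    if n: "n \<in> ?B (M + 1)" for n
  proof -
    have "(\<Sum>m\<in>?B M. rate n m * h m) = (\<Sum>m\<in>?B (M + 2). rate n m * h m)"
      using h by (intro sum.mono_neutral_left finite_states_upto states_upto_mono) auto
    also have "\<dots> = generator h n + h n * out_rate n"
      using n by (intro sum_rate_states_upto) (auto simp: states_upto_def)
    finally show ?thesis .
  qed
  have "(\<Sum>m\<in>?B M. h m * (p m * out_rate m))
      = (\<Sum>m\<in>?B M. \<Sum>n\<in>?B (M + 1). p n * (rate n m * h m))"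
    using balance by (simp add: sum_distrib_left mult_ac)
  also have "\<dots> = (\<Sum>n\<in>?B (M + 1). p n * (\<Sum>m\<in>?B M. rate n m * h m))"
    by (subst sum.swap) (simp add: sum_distrib_left)
  also have "\<dots> = (\<Sum>n\<in>?B (M + 1). p n * (generator h n + h n * out_rate n))"
    using row by simp
  finally have "(\<Sum>m\<in>?B M. h m * (p m * out_rate m))
      = (\<Sum>n\<in>?B (M + 1). p n * generator h n) + (\<Sum>n\<in>?B (M + 1). h n * (p n * out_rate n))"
    by (simp add: distrib_left sum.distrib mult_ac)
  moreover have "(\<Sum>m\<in>?B M. h m * (p m * out_rate m)) = (\<Sum>n\<in>?B (M + 1). h n * (p n * out_rate n))"
    using h by (intro sum.mono_neutral_left finite_states_upto states_upto_mono) auto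
  ultimately show ?thesis
    by simp
qed

definition static_weight :: "nat \<Rightarrow> real" where
  "static_weight k = (if th k = 0 then 1 / mu k else 0)"

definition rho_static :: real where
  "rho_static = (\<Sum>k<K. lam k * static_weight k)"

definition static_share :: "(nat \<Rightarrow> nat) \<Rightarrow> real" where
  "static_share n = (\<Sum>k<K. if th k = 0 then real (n k) / real (load K n) else 0)"

lemma static_weight_nonneg: "k < K \<Longrightarrow> 0 \<le> static_weight k"
  using mu_pos[of k] by (simp add: static_weight_def)

lemma rho_static_eq: "rho_static = (\<Sum>k\<in>{k. k < K \<and> th k = 0}. lam k / mu k)"
proof -
  have "rho_static = (\<Sum>k<K. if th k = 0 then lam k / mu k else 0)"
    unfolding rho_static_def static_weight_def by (intro sum.cong) auto
  also have "\<dots> = (\<Sum>k\<in>{k. k < K \<and> th k = 0}. lam k / mu k)"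
    by (simp add: sum.inter_filter[symmetric])
  finally show ?thesis .
qed

lemma static_share_nonneg: "0 \<le> static_share n"
  unfolding static_share_def by (intro sum_nonneg) auto

lemma static_share_le_1: "static_share n \<le> 1"
proof -
  have "static_share n \<le> (\<Sum>k<K. real (n k) / real (load K n))"
    unfolding static_share_def by (intro sum_mono) auto
  also have "\<dots> = (\<Sum>k<K. real (n k)) / real (load K n)"
    by (simp add: sum_divide_distrib)
  also have "\<dots> = real (load K n) / real (load K n)"
    by (simp add: load_def)
  also have "\<dots> \<le> 1"
    by simp
  finally show ?thesis .
qed

lemma static_share_zero: "static_share (\<lambda>_. 0) = 0"
  unfolding static_share_def by (rule sum.neutral) simp

lemma sum_dep_rate_static_weight:
  "(\<Sum>k<K. if 0 < n k then dep_rate n k * static_weight k else 0) = static_share n"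
  unfolding static_share_def
proof (intro sum.cong refl)
  fix k assume "k \<in> {..<K}"
  then show "(if 0 < n k then dep_rate n k * static_weight k else 0)
      = (if th k = 0 then real (n k) / real (load K n) else 0)"
    using mu_pos[of k] by (auto simp: dep_rate_def static_weight_def)
qed

lemma generator_static_work:
  "generator (weighted_load K static_weight) n = rho_static - static_share n"
  unfolding generator_weighted_load sum_dep_rate_static_weight rho_static_def ..

definition truncated_static_work :: "nat \<Rightarrow> (nat \<Rightarrow> nat) \<Rightarrow> real" where
  "truncated_static_work M n = (if n \<in> states_upto K M then weighted_load K static_weight n else 0)"

lemma truncated_static_work_nonneg: "0 \<le> truncated_static_work M n"
  using static_weight_nonneg by (simp add: truncated_static_work_def weighted_load_nonneg)

lemma generator_truncated_static_work_below:
  assumes "n \<in> states K" "load K n < M"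
  shows "generator (truncated_static_work M) n = rho_static - static_share n"
proof -
  have "generator (truncated_static_work M) n = generator (weighted_load K static_weight) n"
    using assms by (intro generator_local) (auto simp: truncated_static_work_def)
  then show ?thesis
    by (simp add: generator_static_work)
qed

lemma generator_truncated_static_work_top:
  assumes n: "n \<in> states K" and M: "load K n = M"
  shows "generator (truncated_static_work M) n
    = - (weighted_load K static_weight n * (\<Sum>k<K. lam k)) - static_share n"
proof -
  let ?f = "weighted_load K static_weight" and ?h = "truncated_static_work M"
  have "generator ?h n
      = (\<Sum>k<K. - (?f n * lam k) - (if 0 < n k then dep_rate n k * static_weight k else 0))"
    unfolding generator_def
  proof (intro sum.cong refl)
    fix k assume k: "k \<in> {..<K}"
    have "incr n k \<notin> states_upto K M"
      using k M load_incr[of k K n] by (simp add: states_upto_def)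
    moreover have "0 < n k \<Longrightarrow> decr n k \<in> states_upto K M"
      using k M n by (intro decr_in_states_upto) auto
    ultimately show "lam k * (?h (incr n k) - ?h n)
        + (if 0 < n k then dep_rate n k * (?h (decr n k) - ?h n) else 0)
      = - (?f n * lam k) - (if 0 < n k then dep_rate n k * static_weight k else 0)"
      using k n M
      by (auto simp: truncated_static_work_def weighted_load_fun_upd of_nat_diff algebra_simps states_upto_def)
  qed
  also have "\<dots> = - (?f n * (\<Sum>k<K. lam k)) - static_share n"
    by (simp add: sum_subtractf sum_negf sum_distrib_left sum_dep_rate_static_weight)
  finally show ?thesis .
qed

lemma generator_truncated_static_work_ge:
  assumes rho: "1 \<le> rho_static" and M: "1 \<le> M" and n: "n \<in> states_upto K (M + 1)"
  shows "(if n = (\<lambda>_. 0) then 1 else 0)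
      - (if load K n = M then 1 + real M * (\<Sum>k<K. static_weight k) * (\<Sum>k<K. lam k) else 0)
    \<le> generator (truncated_static_work M) n"
proof -
  have n_states: "n \<in> states K" and n_load: "load K n \<le> M + 1"
    using n by (auto simp: states_upto_def)
  consider "load K n < M" | "load K n = M" | "load K n = M + 1"
    using n_load by linarith
  then show ?thesis
  proof cases
    case 1
    then show ?thesis
      using generator_truncated_static_work_below[OF n_states 1] rho static_share_le_1[of n]
        static_share_zero by auto
  next
    case 2
    have "weighted_load K static_weight n * (\<Sum>k<K. lam k)
        \<le> ((\<Sum>k<K. static_weight k) * real M) * (\<Sum>k<K. lam k)"
      using weighted_load_le[of K static_weight n] static_weight_nonneg 2 lam_nonneg
      by (intro mult_right_mono sum_nonneg) auto
    moreover have "n \<noteq> (\<lambda>_. 0)"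
      using 2 M by (auto simp: load_def)
    ultimately show ?thesis
      using generator_truncated_static_work_top[OF n_states 2] static_share_le_1[of n] 2
      by (simp add: algebra_simps)
  next
    case 3
    then have "n \<notin> states_upto K M" and "n \<noteq> (\<lambda>_. 0)"
      by (auto simp: states_upto_def load_def)
    have "0 \<le> generator (truncated_static_work M) n"
      using \<open>n \<notin> states_upto K M\<close> truncated_static_work_nonneg
      by (intro generator_nonneg_if_zero) (auto simp: truncated_static_work_def)
    then show ?thesis
      using 3 \<open>n \<noteq> (\<lambda>_. 0)\<close> by simp
  qed
qed

lemma zero_prob_le_level_prob:
  assumes p: "stationary_distribution (states K) rate p"
    and rho: "1 \<le> rho_static" and M: "1 \<le> M"
  shows "p (\<lambda>_. 0) \<le> (1 + real M * (\<Sum>k<K. static_weight k) * (\<Sum>k<K. lam k)) * (\<Sum>n\<in>level K M. p n)"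
proof -
  let ?c = "1 + real M * (\<Sum>k<K. static_weight k) * (\<Sum>k<K. lam k)"
  let ?B = "states_upto K (M + 1)"
  have p_nonneg: "\<And>n. n \<in> states K \<Longrightarrow> 0 \<le> p n"
    using p by (simp add: stationary_distribution_iff)
  have level_eq: "level K M = {n \<in> ?B. load K n = M}"
    by (auto simp: level_def states_upto_def)
  have "(\<Sum>n\<in>?B. if n = (\<lambda>_. 0) then p n else 0) = p (\<lambda>_. 0)"
    by (simp add: sum.delta[OF finite_states_upto] zero_in_states_upto)
  moreover have "(\<Sum>n\<in>?B. if load K n = M then p n else 0) = (\<Sum>n\<in>level K M. p n)"
    unfolding level_eq sum.inter_filter[OF finite_states_upto] ..
  moreover have "(\<Sum>n\<in>?B. p n * ((if n = (\<lambda>_. 0) then 1 else 0) - (if load K n = M then ?c else 0)))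
      = (\<Sum>n\<in>?B. if n = (\<lambda>_. 0) then p n else 0) - ?c * (\<Sum>n\<in>?B. if load K n = M then p n else 0)"
    unfolding right_diff_distrib sum_subtractf sum_distrib_left
    by (intro arg_cong2[where f = "(-)"] sum.cong refl) auto
  ultimately have "p (\<lambda>_. 0) - ?c * (\<Sum>n\<in>level K M. p n)
      = (\<Sum>n\<in>?B. p n * ((if n = (\<lambda>_. 0) then 1 else 0) - (if load K n = M then ?c else 0)))"
    by simp
  also have "\<dots> \<le> (\<Sum>n\<in>?B. p n * generator (truncated_static_work M) n)"
    using p_nonneg generator_truncated_static_work_ge[OF rho M]
    by (intro sum_mono mult_left_mono) (auto simp: states_upto_def)
  also have "\<dots> = 0"
    using p by (rule stationary_sum_generator) (simp add: truncated_static_work_def)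
  finally show ?thesis
    by simp
qed

lemma stationary_imp_rho_static_less_1:
  assumes p: "stationary_distribution (states K) rate p"
  shows "rho_static < 1"
proof (rule ccontr)
  assume "\<not> rho_static < 1"
  then have rho: "1 \<le> rho_static"
    by simp
  define c where "c = 1 + (\<Sum>k<K. static_weight k) * (\<Sum>k<K. lam k)"
  have p_nonneg: "\<And>n. n \<in> states K \<Longrightarrow> 0 \<le> p n" and p_sum: "(p has_sum 1) (states K)"
    using p by (auto simp: stationary_distribution_iff)
  have "0 \<le> (\<Sum>k<K. static_weight k) * (\<Sum>k<K. lam k)"
    using static_weight_nonneg lam_nonneg by (intro mult_nonneg_nonneg sum_nonneg) auto
  then have c_ge: "1 \<le> c"
    by (simp add: c_def)
  have "0 < p (\<lambda>_. 0) / c"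
    using stationary_pos_at_zero[OF p] c_ge by simp
  moreover have "p (\<lambda>_. 0) / c / real M \<le> (\<Sum>n\<in>level K M. p n)" if M: "1 \<le> M" for M
  proof -
    have level_nonneg: "0 \<le> (\<Sum>n\<in>level K M. p n)"
      using p_nonneg by (intro sum_nonneg) (auto simp: level_def)
    have "p (\<lambda>_. 0) \<le> (1 + real M * (\<Sum>k<K. static_weight k) * (\<Sum>k<K. lam k)) * (\<Sum>n\<in>level K M. p n)"
      using p rho M by (rule zero_prob_le_level_prob)
    also have "\<dots> \<le> (real M * c) * (\<Sum>n\<in>level K M. p n)"
      using M c_ge level_nonneg by (intro mult_right_mono) (auto simp: c_def algebra_simps)
    finally show ?thesis
      using M c_ge by (simp add: divide_le_eq mult_ac)
  qed
  ultimately have "\<exists>N. 1 < (\<Sum>M=1..N. \<Sum>n\<in>level K M. p n)"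
    by (rule harmonic_minorant_sum_unbounded)
  then obtain N where N: "1 < (\<Sum>M=1..N. \<Sum>n\<in>level K M. p n)" ..
  have "(\<Sum>M=1..N. \<Sum>n\<in>level K M. p n) = (\<Sum>n\<in>(\<Union>M\<in>{1..N}. level K M). p n)"
    by (rule sum.UNION_disjoint[symmetric]) (use finite_level in \<open>auto simp: level_def\<close>)
  also have "\<dots> \<le> 1"
    using p_sum p_nonneg finite_level by (intro finite_sum_le_has_sum) (auto simp: level_def)
  finally show False
    using N by simp
qed

section \<open>The uniformised chain and a Foster-Lyapunov criterion\<close>

definition abandon_rate :: "(nat \<Rightarrow> nat) \<Rightarrow> real" where
  "abandon_rate n = (\<Sum>k<K. real (n k) * th k)"

(* Abandonments make the departure rates unbounded, so the chain is uniformised with this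
   state-dependent upper bound of out_rate. *)
definition total_rate :: "(nat \<Rightarrow> nat) \<Rightarrow> real" where
  "total_rate n = 1 + (\<Sum>k<K. lam k) + (\<Sum>k<K. mu k) + abandon_rate n"

lemma abandon_rate_nonneg: "0 \<le> abandon_rate n"
  unfolding abandon_rate_def using th_nonneg by (intro sum_nonneg) auto

lemma total_rate_ge_1: "1 \<le> total_rate n"
proof -
  have "0 \<le> (\<Sum>k<K. lam k)"
    by (intro sum_nonneg) (simp add: lam_nonneg)
  moreover have "0 \<le> (\<Sum>k<K. mu k)"
    by (intro sum_nonneg) (simp add: less_imp_le[OF mu_pos])
  ultimately show ?thesis
    using abandon_rate_nonneg[of n] by (simp add: total_rate_def)
qed

lemma out_rate_less_total_rate: "out_rate n < total_rate n"
proof -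
  have "out_rate n \<le> (\<Sum>k<K. lam k + (mu k + real (n k) * th k))"
    unfolding out_rate_def
  proof (intro sum_mono)
    fix k assume "k \<in> {..<K}"
    then show "lam k + (if 0 < n k then dep_rate n k else 0) \<le> lam k + (mu k + real (n k) * th k)"
      using dep_rate_le[of k n] mu_pos[of k] th_nonneg[of k] by auto
  qed
  then show ?thesis
    unfolding total_rate_def abandon_rate_def by (simp add: sum.distrib)
qed

definition jump_prob :: "(nat \<Rightarrow> nat) \<Rightarrow> (nat \<Rightarrow> nat) \<Rightarrow> real" where
  "jump_prob n m = rate n m / total_rate n + (if m = n then 1 - out_rate n / total_rate n else 0)"

lemma jump_prob_nonneg: "0 \<le> jump_prob n m"
  using out_rate_less_total_rate[of n] total_rate_ge_1[of n] rate_nonneg[of n m]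
  by (auto simp: jump_prob_def)

lemma jump_prob_neq_0:
  assumes "n \<in> states K" "jump_prob n m \<noteq> 0"
  shows "m \<in> states K \<and> load K m \<le> load K n + 1 \<and> load K n \<le> load K m + 1"
proof (cases "m = n")
  case False
  then have "rate n m \<noteq> 0"
    using assms(2) by (simp add: jump_prob_def)
  then show ?thesis
    using rate_neq_0_load[OF assms(1)] by fastforce
qed (use assms in simp)

lemma sum_jump_prob:
  assumes "n \<in> states K" "load K n < N"
  shows "(\<Sum>m\<in>states_upto K N. jump_prob n m * g m) = g n + generator g n / total_rate n"
proof -
  have n: "n \<in> states_upto K N"
    using assms by (simp add: states_upto_def)
  have "(\<Sum>m\<in>states_upto K N. jump_prob n m * g m) = (\<Sum>m\<in>states_upto K N.
      rate n m * g m / total_rate n + (if m = n then (1 - out_rate n / total_rate n) * g m else 0))"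
    by (intro sum.cong refl) (simp add: jump_prob_def distrib_right)
  also have "\<dots> = (\<Sum>m\<in>states_upto K N. rate n m * g m) / total_rate n
      + (1 - out_rate n / total_rate n) * g n"
    using n by (simp add: sum.distrib sum_divide_distrib sum.delta[OF finite_states_upto])
  also have "\<dots> = g n + generator g n / total_rate n"
    using total_rate_ge_1[of n] sum_rate_states_upto[OF assms, of g] by (simp add: field_simps)
  finally show ?thesis .
qed

(* One step u P of the chain uniformised at total_rate, acting on measures u: only states of load
   at most load K m + 1 can jump to m, so this finite sum is the whole product. *)
definition step :: "((nat \<Rightarrow> nat) \<Rightarrow> real) \<Rightarrow> (nat \<Rightarrow> nat) \<Rightarrow> real" where
  "step u m = (\<Sum>n\<in>states_upto K (load K m + 1). u n * jump_prob n m)"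

lemma step_nonneg: "(\<And>n. 0 \<le> u n) \<Longrightarrow> 0 \<le> step u m"
  unfolding step_def using jump_prob_nonneg by (intro sum_nonneg mult_nonneg_nonneg) auto

lemma step_support:
  assumes "{n. u n \<noteq> 0} \<subseteq> states_upto K j"
  shows "{m. step u m \<noteq> 0} \<subseteq> states_upto K (j + 1)"
proof
  fix m assume "m \<in> {m. step u m \<noteq> 0}"
  then obtain n where n: "n \<in> states_upto K (load K m + 1)" "u n * jump_prob n m \<noteq> 0"
    unfolding step_def by (auto elim: sum.not_neutral_contains_not_neutral)
  then have "n \<in> states_upto K j"
    using assms by auto
  then show "m \<in> states_upto K (j + 1)"
    using n jump_prob_neq_0[of n m] by (auto simp: states_upto_def)
qed

lemma step_eq_sum_states_upto:
  assumes u: "{n. u n \<noteq> 0} \<subseteq> states_upto K j" and "j < N" "m \<in> states_upto K N"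
  shows "step u m = (\<Sum>n\<in>states_upto K N. u n * jump_prob n m)"
proof -
  have "step u m = (\<Sum>n\<in>states_upto K (load K m + 1 + N). u n * jump_prob n m)"
    unfolding step_def
  proof (intro sum.mono_neutral_left finite_states_upto states_upto_mono ballI)
    fix n assume "n \<in> states_upto K (load K m + 1 + N) - states_upto K (load K m + 1)"
    then show "u n * jump_prob n m = 0"
      using jump_prob_neq_0[of n m] by (auto simp: states_upto_def)
  qed simp
  also have "\<dots> = (\<Sum>n\<in>states_upto K N. u n * jump_prob n m)"
    using u \<open>j < N\<close> states_upto_mono[of j N K]
    by (intro sum.mono_neutral_right finite_states_upto states_upto_mono) auto
  finally show ?thesis .
qed

lemma sum_step:
  assumes u: "{n. u n \<noteq> 0} \<subseteq> states_upto K j" and "j < N"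
  shows "(\<Sum>m\<in>states_upto K N. step u m * g m)
    = (\<Sum>n\<in>states_upto K N. u n * (g n + generator g n / total_rate n))"
proof -
  have "(\<Sum>m\<in>states_upto K N. step u m * g m)
      = (\<Sum>m\<in>states_upto K N. \<Sum>n\<in>states_upto K N. u n * jump_prob n m * g m)"
    using step_eq_sum_states_upto[OF assms] by (simp add: sum_distrib_right)
  also have "\<dots> = (\<Sum>n\<in>states_upto K N. \<Sum>m\<in>states_upto K N. u n * jump_prob n m * g m)"
    by (rule sum.swap)
  also have "\<dots> = (\<Sum>n\<in>states_upto K N. u n * (\<Sum>m\<in>states_upto K N. jump_prob n m * g m))"
    by (simp add: sum_distrib_left mult.assoc)
  also have "\<dots> = (\<Sum>n\<in>states_upto K N. u n * (g n + generator g n / total_rate n))"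
  proof (intro sum.cong refl)
    fix n assume "n \<in> states_upto K N"
    show "u n * (\<Sum>m\<in>states_upto K N. jump_prob n m * g m) = u n * (g n + generator g n / total_rate n)"
    proof (cases "u n = 0")
      case False
      then have "n \<in> states K" "load K n < N"
        using u \<open>j < N\<close> by (auto simp: states_upto_def)
      then show ?thesis
        by (simp add: sum_jump_prob)
    qed simp
  qed
  finally show ?thesis .
qed

definition chain_distr :: "nat \<Rightarrow> (nat \<Rightarrow> nat) \<Rightarrow> real" where
  "chain_distr t = (step ^^ t) (\<lambda>n. if n = (\<lambda>_. 0) then 1 else 0)"

lemma chain_distr_0: "chain_distr 0 = (\<lambda>n. if n = (\<lambda>_. 0) then 1 else 0)"
  by (simp add: chain_distr_def)

lemma chain_distr_Suc: "chain_distr (Suc t) = step (chain_distr t)"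
  by (simp add: chain_distr_def)

lemma chain_distr_support: "{n. chain_distr t n \<noteq> 0} \<subseteq> states_upto K t"
proof (induction t)
  case 0
  then show ?case
    using zero_in_states_upto by (auto simp: chain_distr_0)
next
  case (Suc t)
  then show ?case
    using step_support by (simp add: chain_distr_Suc)
qed

lemma chain_distr_nonneg: "0 \<le> chain_distr t n"
  by (induction t arbitrary: n) (simp_all add: chain_distr_0 chain_distr_Suc step_nonneg)

lemma sum_chain_distr: "t < N \<Longrightarrow> (\<Sum>n\<in>states_upto K N. chain_distr t n) = 1"
proof (induction t)
  case 0
  then show ?case
    by (simp add: chain_distr_0 sum.delta[OF finite_states_upto] zero_in_states_upto)
next
  case (Suc t)
  have "(\<Sum>n\<in>states_upto K N. chain_distr (Suc t) n) = (\<Sum>n\<in>states_upto K N. step (chain_distr t) n * 1)"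
    by (simp add: chain_distr_Suc)
  also have "\<dots> = (\<Sum>n\<in>states_upto K N. chain_distr t n)"
    using Suc.prems by (subst sum_step[OF chain_distr_support]) (simp_all add: generator_const)
  finally show ?case
    using Suc by simp
qed

lemma sum_chain_distr_le_1: "(\<Sum>n\<in>states_upto K j. chain_distr t n) \<le> 1"
proof -
  have "(\<Sum>n\<in>states_upto K j. chain_distr t n) \<le> (\<Sum>n\<in>states_upto K (j + t + 1). chain_distr t n)"
    using chain_distr_nonneg by (intro sum_mono2 finite_states_upto states_upto_mono) auto
  also have "\<dots> = 1"
    by (rule sum_chain_distr) simp
  finally show ?thesis .
qed

lemma chain_distr_le_1: "chain_distr t n \<le> 1"
proof (cases "n \<in> states_upto K t")
  case True
  then have "chain_distr t n \<le> (\<Sum>n\<in>states_upto K t. chain_distr t n)"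
    using chain_distr_nonneg by (intro member_le_sum finite_states_upto) auto
  then show ?thesis
    using sum_chain_distr_le_1[of t t] by simp
next
  case False
  then have "chain_distr t n = 0"
    using chain_distr_support[of t] by auto
  then show ?thesis
    by simp
qed

lemma chain_distr_dynkin:
  assumes "T < N"
  shows "(\<Sum>n\<in>states_upto K N. chain_distr T n * V n)
    = V (\<lambda>_. 0) + (\<Sum>t<T. \<Sum>n\<in>states_upto K N. chain_distr t n * (generator V n / total_rate n))"
  using assms
proof (induction T)
  case 0
  have "(\<Sum>n\<in>states_upto K N. chain_distr 0 n * V n) = (\<Sum>n\<in>states_upto K N. if n = (\<lambda>_. 0) then V n else 0)"
    by (intro sum.cong) (simp_all add: chain_distr_0)
  then show ?case
    by (simp add: sum.delta[OF finite_states_upto] zero_in_states_upto)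
next
  case (Suc T)
  have "(\<Sum>n\<in>states_upto K N. chain_distr (Suc T) n * V n)
      = (\<Sum>n\<in>states_upto K N. chain_distr T n * V n)
        + (\<Sum>n\<in>states_upto K N. chain_distr T n * (generator V n / total_rate n))"
    using Suc.prems unfolding chain_distr_Suc
    by (subst sum_step[OF chain_distr_support]) (simp_all add: distrib_left sum.distrib)
  then show ?case
    using Suc by simp
qed

lemma sum_chain_distr_drift_le:
  assumes drift_le: "\<And>n. n \<in> states K \<Longrightarrow> generator V n \<le> b * total_rate n"
    and drift_neg: "\<And>n. n \<in> states K \<Longrightarrow> L < load K n \<Longrightarrow> generator V n \<le> - \<eta> * total_rate n"
    and "t < N" "L \<le> N"
  shows "(\<Sum>n\<in>states_upto K N. chain_distr t n * (generator V n / total_rate n))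
    \<le> - \<eta> + (\<eta> + b) * (\<Sum>n\<in>states_upto K L. chain_distr t n)"
proof -
  have drift: "generator V n / total_rate n \<le> - \<eta> + (\<eta> + b) * (if n \<in> states_upto K L then 1 else 0)"
    if "n \<in> states K" for n
    using drift_le[OF that] drift_neg[OF that] total_rate_ge_1[of n]
    by (auto simp: states_upto_def that divide_le_eq)
  have "(\<Sum>n\<in>states_upto K N. chain_distr t n * (generator V n / total_rate n))
      \<le> (\<Sum>n\<in>states_upto K N. chain_distr t n * (- \<eta> + (\<eta> + b) * (if n \<in> states_upto K L then 1 else 0)))"
    using drift chain_distr_nonneg by (intro sum_mono mult_left_mono) (auto simp: states_upto_def)
  also have "\<dots> = (\<Sum>n\<in>states_upto K N. - \<eta> * chain_distr t n
      + (\<eta> + b) * (if n \<in> states_upto K L then chain_distr t n else 0))"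
    by (intro sum.cong) (simp_all add: algebra_simps)
  also have "\<dots> = - \<eta> * (\<Sum>n\<in>states_upto K N. chain_distr t n)
      + (\<eta> + b) * (\<Sum>n\<in>states_upto K N \<inter> states_upto K L. chain_distr t n)"
    unfolding sum.distrib sum_distrib_left[symmetric] sum.inter_restrict[OF finite_states_upto] ..
  also have "states_upto K N \<inter> states_upto K L = states_upto K L"
    using states_upto_mono[OF \<open>L \<le> N\<close>] by auto
  finally show ?thesis
    using sum_chain_distr[OF \<open>t < N\<close>] by simp
qed

lemma sum_chain_distr_states_upto_ge:
  assumes V_nonneg: "\<And>n. n \<in> states K \<Longrightarrow> 0 \<le> V n" and V_zero: "V (\<lambda>_. 0) = 0"
    and b: "0 \<le> b" and eta: "0 < \<eta>"
    and drift_le: "\<And>n. n \<in> states K \<Longrightarrow> generator V n \<le> b * total_rate n"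
    and drift_neg: "\<And>n. n \<in> states K \<Longrightarrow> L < load K n \<Longrightarrow> generator V n \<le> - \<eta> * total_rate n"
  shows "\<eta> * real T / (\<eta> + b) \<le> (\<Sum>t<T. \<Sum>n\<in>states_upto K L. chain_distr t n)"
proof -
  define N where "N = T + L + 1"
  have "0 \<le> (\<Sum>n\<in>states_upto K N. chain_distr T n * V n)"
    using V_nonneg chain_distr_nonneg by (intro sum_nonneg mult_nonneg_nonneg) (auto simp: states_upto_def)
  also have "\<dots> = (\<Sum>t<T. \<Sum>n\<in>states_upto K N. chain_distr t n * (generator V n / total_rate n))"
    using chain_distr_dynkin[of T N] V_zero by (simp add: N_def)
  also have "\<dots> \<le> (\<Sum>t<T. - \<eta> + (\<eta> + b) * (\<Sum>n\<in>states_upto K L. chain_distr t n))"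
    using sum_chain_distr_drift_le[OF drift_le drift_neg] by (intro sum_mono) (simp add: N_def)
  also have "\<dots> = - \<eta> * real T + (\<eta> + b) * (\<Sum>t<T. \<Sum>n\<in>states_upto K L. chain_distr t n)"
    unfolding sum.distrib sum_distrib_left[symmetric] by simp
  finally show ?thesis
    using eta b by (simp add: divide_le_eq mult.commute)
qed

definition cesaro :: "nat \<Rightarrow> (nat \<Rightarrow> nat) \<Rightarrow> real" where
  "cesaro i n = (\<Sum>t<Suc i. chain_distr t n) / real (Suc i)"

lemma cesaro_nonneg: "0 \<le> cesaro i n"
  unfolding cesaro_def using chain_distr_nonneg by (intro divide_nonneg_nonneg sum_nonneg) auto

lemma sum_cesaro: "(\<Sum>n\<in>A. cesaro i n) = (\<Sum>t<Suc i. \<Sum>n\<in>A. chain_distr t n) / real (Suc i)"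
  unfolding cesaro_def by (simp add: sum_divide_distrib[symmetric] sum.swap[of _ A])

lemma sum_cesaro_le_1: "(\<Sum>n\<in>states_upto K j. cesaro i n) \<le> 1"
proof -
  have "(\<Sum>t<Suc i. \<Sum>n\<in>states_upto K j. chain_distr t n) \<le> (\<Sum>t<Suc i. 1)"
    using sum_chain_distr_le_1 by (intro sum_mono) auto
  then show ?thesis
    unfolding sum_cesaro by (simp add: divide_le_eq)
qed

lemma cesaro_le_1: "cesaro i n \<le> 1"
proof -
  have "(\<Sum>t<Suc i. chain_distr t n) \<le> (\<Sum>t<Suc i. 1)"
    using chain_distr_le_1 by (intro sum_mono) auto
  then show ?thesis
    unfolding cesaro_def by (simp add: divide_le_eq)
qed

lemma step_cesaro: "step (cesaro i) m - cesaro i m = (chain_distr (Suc i) m - chain_distr 0 m) / real (Suc i)"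
proof -
  have "step (cesaro i) m
      = (\<Sum>n\<in>states_upto K (load K m + 1). \<Sum>t<Suc i. chain_distr t n * jump_prob n m) / real (Suc i)"
    unfolding step_def cesaro_def
    by (simp add: sum_divide_distrib sum_distrib_right del: sum.lessThan_Suc)
  also have "\<dots> = (\<Sum>t<Suc i. step (chain_distr t) m) / real (Suc i)"
    unfolding step_def by (subst sum.swap) (rule refl)
  finally have "step (cesaro i) m = (\<Sum>t<Suc i. chain_distr (Suc t) m) / real (Suc i)"
    by (simp add: chain_distr_Suc)
  then have "step (cesaro i) m - cesaro i m
      = (\<Sum>t<Suc i. chain_distr (Suc t) m - chain_distr t m) / real (Suc i)"
    unfolding cesaro_def by (simp add: sum_subtractf diff_divide_distrib)
  also have "\<dots> = (chain_distr (Suc i) m - chain_distr 0 m) / real (Suc i)"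
    by (subst sum_lessThan_telescope) simp
  finally show ?thesis .
qed

lemma cesaro_limit_invariant:
  assumes r: "strict_mono r" and lim: "\<And>n. n \<in> states K \<Longrightarrow> (\<lambda>i. cesaro (r i) n) \<longlonglongrightarrow> \<nu> n"
    and m: "m \<in> states K"
  shows "step \<nu> m = \<nu> m"
proof -
  have step_lim: "(\<lambda>i. step (cesaro (r i)) m) \<longlonglongrightarrow> step \<nu> m"
    unfolding step_def using lim by (intro tendsto_sum tendsto_mult_right) (auto simp: states_upto_def)
  have "(\<lambda>i. step (cesaro (r i)) m - cesaro (r i) m) \<longlonglongrightarrow> 0"
  proof (rule Lim_null_comparison)
    show "(\<lambda>i. inverse (real (Suc i))) \<longlonglongrightarrow> 0"
      by (rule LIMSEQ_inverse_real_of_nat)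
    show "\<forall>\<^sub>F i in sequentially. norm (step (cesaro (r i)) m - cesaro (r i) m) \<le> inverse (real (Suc i))"
    proof (intro always_eventually allI)
      fix i
      have "\<bar>chain_distr (Suc (r i)) m - chain_distr 0 m\<bar> \<le> 1"
        using chain_distr_nonneg[of "Suc (r i)" m] chain_distr_le_1[of "Suc (r i)" m]
          chain_distr_nonneg[of 0 m] chain_distr_le_1[of 0 m] by (auto simp: abs_le_iff)
      moreover have "i \<le> r i"
        using seq_suble[OF r] by simp
      ultimately have "\<bar>chain_distr (Suc (r i)) m - chain_distr 0 m\<bar> / real (Suc (r i)) \<le> 1 / real (Suc i)"
        by (intro frac_le) auto
      then show "norm (step (cesaro (r i)) m - cesaro (r i) m) \<le> inverse (real (Suc i))"
        unfolding step_cesaro real_norm_def abs_divide by (simp add: divide_inverse)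
    qed
  qed
  from tendsto_diff[OF step_lim this] have "(\<lambda>i. cesaro (r i) m) \<longlonglongrightarrow> step \<nu> m"
    by simp
  then show ?thesis
    using lim[OF m] LIMSEQ_unique by blast
qed

lemma invariant_measure_exists:
  assumes mass: "\<And>i. \<gamma> \<le> (\<Sum>n\<in>states_upto K L. cesaro i n)"
  obtains \<nu> where "\<And>n. n \<in> states K \<Longrightarrow> 0 \<le> \<nu> n" and "\<And>j. (\<Sum>n\<in>states_upto K j. \<nu> n) \<le> 1"
    and "\<gamma> \<le> (\<Sum>n\<in>states_upto K L. \<nu> n)" and "\<And>m. m \<in> states K \<Longrightarrow> step \<nu> m = \<nu> m"
proof -
  define e where "e = from_nat_into (states K)"
  have "states K \<noteq> {}"
    using zero_in_states_upto by (auto simp: states_upto_def)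
  then have range_e: "range e = states K"
    unfolding e_def using countable_states by (rule range_from_nat_into)
  obtain r where r: "strict_mono r" and conv: "\<And>j. convergent (\<lambda>i. cesaro (r i) (e j))"
    using diagonal_subseq_convergent[of "\<lambda>i j. cesaro i (e j)" 0 1] cesaro_nonneg cesaro_le_1 by auto
  define \<nu> where "\<nu> n = lim (\<lambda>i. cesaro (r i) n)" for n
  have lim: "(\<lambda>i. cesaro (r i) n) \<longlonglongrightarrow> \<nu> n" if n: "n \<in> states K" for n
  proof -
    obtain j where "n = e j"
      using n range_e by (metis rangeE)
    then show ?thesis
      using conv[of j] unfolding \<nu>_def by (simp add: convergent_LIMSEQ_iff)
  qed
  have sum_lim: "(\<lambda>i. \<Sum>n\<in>states_upto K j. cesaro (r i) n) \<longlonglongrightarrow> (\<Sum>n\<in>states_upto K j. \<nu> n)" for j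
    using lim by (intro tendsto_sum) (auto simp: states_upto_def)
  show ?thesis
  proof (rule that)
    show "0 \<le> \<nu> n" if "n \<in> states K" for n
      using lim[OF that] cesaro_nonneg by (intro LIMSEQ_le_const) auto
    show "(\<Sum>n\<in>states_upto K j. \<nu> n) \<le> 1" for j
      using sum_cesaro_le_1 by (intro LIMSEQ_le_const2[OF sum_lim]) auto
    show "\<gamma> \<le> (\<Sum>n\<in>states_upto K L. \<nu> n)"
      using mass by (intro LIMSEQ_le_const[OF sum_lim]) auto
    show "step \<nu> m = \<nu> m" if "m \<in> states K" for m
      using r lim that by (rule cesaro_limit_invariant)
  qed
qed

lemma balance_of_invariant:
  assumes m: "m \<in> states K" and inv: "step \<nu> m = \<nu> m"
  shows "\<nu> m / total_rate m * out_rate m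
    = (\<Sum>n\<in>states_upto K (load K m + 1). \<nu> n / total_rate n * rate n m)"
proof -
  have "m \<in> states_upto K (load K m + 1)"
    using m by (simp add: states_upto_def)
  have "step \<nu> m = (\<Sum>n\<in>states_upto K (load K m + 1).
      \<nu> n / total_rate n * rate n m + (if n = m then \<nu> m * (1 - out_rate m / total_rate m) else 0))"
    unfolding step_def jump_prob_def by (intro sum.cong refl) (auto simp: algebra_simps)
  also have "\<dots> = (\<Sum>n\<in>states_upto K (load K m + 1). \<nu> n / total_rate n * rate n m)
      + \<nu> m * (1 - out_rate m / total_rate m)"
    using \<open>m \<in> states_upto K (load K m + 1)\<close>
    by (simp add: sum.distrib sum.delta[OF finite_states_upto])
  finally have "step \<nu> m = (\<Sum>n\<in>states_upto K (load K m + 1). \<nu> n / total_rate n * rate n m)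
      + \<nu> m * (1 - out_rate m / total_rate m)" .
  then show ?thesis
    using inv by (simp add: algebra_simps)
qed

lemma has_stationary_regime_if_balanced:
  assumes nonneg: "\<And>n. n \<in> states K \<Longrightarrow> 0 \<le> g n" and Z: "(g has_sum Z) (states K)" "0 < Z"
    and balance: "\<And>m. m \<in> states K \<Longrightarrow>
      g m * out_rate m = (\<Sum>n\<in>states_upto K (load K m + 1). g n * rate n m)"
  shows "has_stationary_regime (states K) rate"
proof -
  define p where "p n = inverse Z * g n" for n
  have "stationary_distribution (states K) rate p"
    unfolding stationary_distribution_iff
  proof (intro conjI ballI)
    show "0 \<le> p n" if "n \<in> states K" for n
      using nonneg[OF that] Z by (simp add: p_def)
    show "(p has_sum 1) (states K)"
      using has_sum_cmult_right[OF Z(1), of "inverse Z"] Z(2) unfolding p_def by simp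
    show "p m * out_rate m = (\<Sum>n\<in>states_upto K (load K m + 1). p n * rate n m)"
      if "m \<in> states K" for m
      using arg_cong[OF balance[OF that], of "\<lambda>x. inverse Z * x"]
      by (simp add: p_def sum_distrib_left mult.assoc)
  qed
  then show ?thesis
    unfolding has_stationary_regime_def by blast
qed

lemma stationary_of_invariant_measure:
  assumes nonneg: "\<And>n. n \<in> states K \<Longrightarrow> 0 \<le> \<nu> n"
    and bounded: "\<And>j. (\<Sum>n\<in>states_upto K j. \<nu> n) \<le> 1"
    and pos: "0 < (\<Sum>n\<in>states_upto K L. \<nu> n)"
    and inv: "\<And>m. m \<in> states K \<Longrightarrow> step \<nu> m = \<nu> m"
  shows "has_stationary_regime (states K) rate"
proof -
  define g where "g n = \<nu> n / total_rate n" for n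
  have g_nonneg: "0 \<le> g n" and g_le: "g n \<le> \<nu> n" if "n \<in> states K" for n
    using nonneg[OF that] total_rate_ge_1[of n] by (simp_all add: g_def divide_le_eq mult_le_cancel_left1)
  have "g summable_on states K"
  proof (rule summable_on_states_if_bounded)
    show "(\<Sum>n\<in>states_upto K j. g n) \<le> 1" for j
      using g_le bounded[of j] sum_mono[of "states_upto K j" g \<nu>] by (force simp: states_upto_def)
  qed (rule g_nonneg)
  then obtain Z where Z: "(g has_sum Z) (states K)"
    by (auto simp: summable_on_def)
  obtain n0 where n0: "n0 \<in> states_upto K L" "0 < \<nu> n0"
    using pos sum_nonpos[of "states_upto K L" \<nu>] by (meson linorder_not_less)
  have "g n0 \<le> Z"
    using Z g_nonneg n0(1) finite_sum_le_has_sum[OF Z, of "{n0}"] by (auto simp: states_upto_def)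
  moreover have "0 < g n0"
    using n0 total_rate_ge_1[of n0] by (simp add: g_def)
  ultimately have "0 < Z"
    by simp
  with g_nonneg Z show ?thesis
    using balance_of_invariant[OF _ inv] unfolding g_def by (rule has_stationary_regime_if_balanced)
qed

lemma foster_criterion:
  assumes "\<And>n. n \<in> states K \<Longrightarrow> 0 \<le> V n" and "V (\<lambda>_. 0) = 0" and b: "0 \<le> b" and eta: "0 < \<eta>"
    and "\<And>n. n \<in> states K \<Longrightarrow> generator V n \<le> b * total_rate n"
    and "\<And>n. n \<in> states K \<Longrightarrow> L < load K n \<Longrightarrow> generator V n \<le> - \<eta> * total_rate n"
  shows "has_stationary_regime (states K) rate"
proof -
  have mass: "\<eta> / (\<eta> + b) \<le> (\<Sum>n\<in>states_upto K L. cesaro i n)" for i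
    using sum_chain_distr_states_upto_ge[OF assms, where T = "Suc i"]
    unfolding sum_cesaro by (subst pos_le_divide_eq) auto
  obtain \<nu> where "\<And>n. n \<in> states K \<Longrightarrow> 0 \<le> \<nu> n" "\<And>j. (\<Sum>n\<in>states_upto K j. \<nu> n) \<le> 1"
    "\<eta> / (\<eta> + b) \<le> (\<Sum>n\<in>states_upto K L. \<nu> n)" "\<And>m. m \<in> states K \<Longrightarrow> step \<nu> m = \<nu> m"
    using invariant_measure_exists[OF mass] by blast
  moreover have "0 < \<eta> / (\<eta> + b)"
    using eta b by simp
  ultimately show ?thesis
    by (intro stationary_of_invariant_measure[of \<nu> L]) auto
qed

section \<open>A Lyapunov function under the stability condition\<close>

definition lyapunov_weight :: "real \<Rightarrow> nat \<Rightarrow> real" where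
  "lyapunov_weight w k = (if th k = 0 then 1 / mu k else w)"

lemma lyapunov_weight_nonneg: "0 \<le> w \<Longrightarrow> k < K \<Longrightarrow> 0 \<le> lyapunov_weight w k"
  using mu_pos[of k] by (simp add: lyapunov_weight_def)

lemma generator_lyapunov_le:
  assumes w: "0 \<le> w"
  shows "generator (weighted_load K (lyapunov_weight w)) n
    \<le> rho_static + w * (\<Sum>k<K. lam k) - static_share n - w * abandon_rate n"
proof -
  have "(\<Sum>k<K. lam k * lyapunov_weight w k) \<le> (\<Sum>k<K. lam k * static_weight k + w * lam k)"
    using w lam_nonneg
    by (intro sum_mono) (auto simp: lyapunov_weight_def static_weight_def)
  moreover have "(\<Sum>k<K. (if 0 < n k then dep_rate n k * static_weight k else 0) + w * (real (n k) * th k))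
      \<le> (\<Sum>k<K. if 0 < n k then dep_rate n k * lyapunov_weight w k else 0)"
  proof (intro sum_mono)
    fix k assume k: "k \<in> {..<K}"
    show "(if 0 < n k then dep_rate n k * static_weight k else 0) + w * (real (n k) * th k)
        \<le> (if 0 < n k then dep_rate n k * lyapunov_weight w k else 0)"
      using dep_rate_ge[of k n] k w
      by (auto simp: lyapunov_weight_def static_weight_def mult.commute intro: mult_left_mono)
  qed
  ultimately show ?thesis
    unfolding generator_weighted_load rho_static_def abandon_rate_def
    by (simp add: sum.distrib sum_distrib_left sum_dep_rate_static_weight)
qed

definition theta_min :: real where
  "theta_min = Min (insert 1 (th ` {k. k < K \<and> th k \<noteq> 0}))"

lemma theta_min_pos: "0 < theta_min"
  unfolding theta_min_def using th_nonneg by (subst Min_gr_iff) (auto simp: order.order_iff_strict)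

lemma theta_min_le: "k < K \<Longrightarrow> th k \<noteq> 0 \<Longrightarrow> theta_min \<le> th k"
  unfolding theta_min_def by (intro Min_le) auto

lemma static_share_ge:
  assumes L: "0 < load K n"
  shows "1 - abandon_rate n / (theta_min * real (load K n)) \<le> static_share n"
proof -
  have "(\<Sum>k<K. real (n k) / real (load K n)) = (\<Sum>k<K. real (n k)) / real (load K n)"
    by (simp add: sum_divide_distrib)
  also have "(\<Sum>k<K. real (n k)) = real (load K n)"
    by (simp add: load_def)
  also have "real (load K n) / real (load K n) = 1"
    using L by simp
  finally have sum_eq_1: "(\<Sum>k<K. real (n k) / real (load K n)) = 1" .
  have "1 - static_share n = (\<Sum>k<K. real (n k) / real (load K n)
      - (if th k = 0 then real (n k) / real (load K n) else 0))"
    unfolding static_share_def sum_subtractf sum_eq_1 ..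
  also have "\<dots> = (\<Sum>k<K. if th k = 0 then 0 else real (n k) / real (load K n))"
    by (intro sum.cong) auto
  also have "\<dots> \<le> (\<Sum>k<K. real (n k) * th k / (theta_min * real (load K n)))"
  proof (intro sum_mono)
    fix k assume k: "k \<in> {..<K}"
    show "(if th k = 0 then 0 else real (n k) / real (load K n))
        \<le> real (n k) * th k / (theta_min * real (load K n))"
    proof (cases "th k = 0")
      case False
      have "real (n k) / real (load K n) = real (n k) * theta_min / (theta_min * real (load K n))"
        using theta_min_pos by simp
      also have "\<dots> \<le> real (n k) * th k / (theta_min * real (load K n))"
        using theta_min_le[of k] k False theta_min_pos by (intro divide_right_mono mult_left_mono) auto
      finally show ?thesis
        using False by simp
    qed (simp add: theta_min_pos)
  qed
  also have "\<dots> = abandon_rate n / (theta_min * real (load K n))"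
    unfolding abandon_rate_def by (simp add: sum_divide_distrib)
  finally show ?thesis
    by simp
qed

lemma static_share_abandon_rate_ge:
  assumes d: "0 < d" and w: "0 < w" and large: "8 / (w * theta_min * d) \<le> real (load K n)"
  shows "1 - d / 4 \<le> static_share n + w / 2 * abandon_rate n"
proof (cases "2 / w \<le> abandon_rate n")
  case True
  then have "1 \<le> w / 2 * abandon_rate n"
    using w by (simp add: field_simps)
  then show ?thesis
    using static_share_nonneg[of n] d by simp
next
  case False
  have "0 < 8 / (w * theta_min * d)"
    using w theta_min_pos d by simp
  then have "0 < real (load K n)"
    using large by linarith
  then have L: "0 < theta_min * real (load K n)"
    using theta_min_pos by simp
  have "2 / w \<le> d / 4 * theta_min * real (load K n)"
    using large w theta_min_pos d by (simp add: field_simps)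
  then have "abandon_rate n \<le> d / 4 * (theta_min * real (load K n))"
    using False by simp
  then have "abandon_rate n / (theta_min * real (load K n)) \<le> d / 4"
    using L by (simp add: divide_le_eq)
  moreover have "1 - abandon_rate n / (theta_min * real (load K n)) \<le> static_share n"
    using L theta_min_pos by (intro static_share_ge) (simp add: zero_less_mult_iff)
  moreover have "0 \<le> w / 2 * abandon_rate n"
    using w abandon_rate_nonneg[of n] by simp
  ultimately show ?thesis
    by linarith
qed

lemma lyapunov_drift:
  assumes rho: "rho_static < 1"
  obtains w \<eta> L where "0 < w" and "0 < \<eta>"
    and "\<And>n. n \<in> states K \<Longrightarrow> L < load K n \<Longrightarrow>
      generator (weighted_load K (lyapunov_weight w)) n \<le> - \<eta> * total_rate n"
proof -
  define d where "d = 1 - rho_static"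
  define \<Lambda> where "\<Lambda> = (\<Sum>k<K. lam k)"
  define C where "C = 1 + \<Lambda> + (\<Sum>k<K. mu k)"
  define w where "w = d / (4 * (1 + \<Lambda>))"
  define \<eta> where "\<eta> = min (w / 2) (d / (4 * C))"
  define L where "L = nat \<lceil>8 / (w * theta_min * d)\<rceil>"
  have d: "0 < d"
    using rho by (simp add: d_def)
  have \<Lambda>: "0 \<le> \<Lambda>"
    unfolding \<Lambda>_def by (intro sum_nonneg) (simp add: lam_nonneg)
  have "0 \<le> (\<Sum>k<K. mu k)"
    by (intro sum_nonneg) (simp add: less_imp_le[OF mu_pos])
  then have C: "1 \<le> C"
    using \<Lambda> by (simp add: C_def)
  have w: "0 < w" and w\<Lambda>: "w * \<Lambda> \<le> d / 4"
    using d \<Lambda> by (simp_all add: w_def field_simps)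
  have \<eta>: "0 < \<eta>" "\<eta> \<le> w / 2" "\<eta> * C \<le> d / 4"
    using d w C by (auto simp: \<eta>_def min_def field_simps)
  have "generator (weighted_load K (lyapunov_weight w)) n \<le> - \<eta> * total_rate n"
    if "L < load K n" for n
  proof -
    have "generator (weighted_load K (lyapunov_weight w)) n
        \<le> 1 - d + d / 4 - static_share n - w * abandon_rate n"
      using generator_lyapunov_le[of w n] w w\<Lambda> unfolding d_def \<Lambda>_def by linarith
    moreover have "\<eta> * total_rate n \<le> d / 4 + w / 2 * abandon_rate n"
      unfolding total_rate_def distrib_left C_def[symmetric] \<Lambda>_def[symmetric]
      using \<eta> C abandon_rate_nonneg[of n]
      by (intro add_mono order_trans[OF _ \<eta>(3)] mult_right_mono) auto
    moreover have "1 - d / 4 \<le> static_share n + w / 2 * abandon_rate n"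
      using d w that unfolding L_def by (intro static_share_abandon_rate_ge) linarith+
    ultimately show ?thesis
      using d by linarith
  qed
  with w \<eta>(1) show ?thesis
    by (rule that)
qed

lemma stationary_if_rho_static_less_1:
  assumes "rho_static < 1"
  shows "has_stationary_regime (states K) rate"
proof -
  obtain w \<eta> L where w: "0 < w" and \<eta>: "0 < \<eta>"
    and drift: "\<And>n. n \<in> states K \<Longrightarrow> L < load K n \<Longrightarrow>
      generator (weighted_load K (lyapunov_weight w)) n \<le> - \<eta> * total_rate n"
    using lyapunov_drift[OF assms] by blast
  let ?b = "\<Sum>k<K. lam k * lyapunov_weight w k"
  have weight_nonneg: "\<And>k. k < K \<Longrightarrow> 0 \<le> lyapunov_weight w k"
    using w by (simp add: lyapunov_weight_nonneg)
  have b: "0 \<le> ?b"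
    using weight_nonneg lam_nonneg by (intro sum_nonneg mult_nonneg_nonneg) auto
  show ?thesis
  proof (rule foster_criterion[OF _ _ b \<eta> _ drift])
    show "0 \<le> weighted_load K (lyapunov_weight w) n" for n
      using weight_nonneg by (rule weighted_load_nonneg)
    show "weighted_load K (lyapunov_weight w) (\<lambda>_. 0) = 0"
      by (simp add: weighted_load_def)
    show "generator (weighted_load K (lyapunov_weight w)) n \<le> ?b * total_rate n" for n
    proof -
      have "?b * 1 \<le> ?b * total_rate n"
        using total_rate_ge_1[of n] b by (rule mult_left_mono)
      then show ?thesis
        using generator_weighted_load_le[of "lyapunov_weight w", OF weight_nonneg, of n] by linarith
    qed
  qed
qed

end

theorem proposition1:
  fixes K :: nat and lam mu th :: "nat \<Rightarrow> real"
  assumes "K \<ge> 1"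
    and "\<And>k. k < K \<Longrightarrow> lam k > 0"
    and "\<And>k. k < K \<Longrightarrow> mu k > 0"
    and "\<And>k. k < K \<Longrightarrow> th k \<ge> 0"
  shows "has_stationary_regime (states K) (ps_rate K lam mu th) \<longleftrightarrow>
         (\<Sum>k\<in>{k. k < K \<and> th k = 0}. lam k / mu k) < 1"
proof -
  interpret ps_queue K lam mu th
    using assms by unfold_locales (auto simp: less_imp_le)
  show ?thesis
    using stationary_imp_rho_static_less_1 stationary_if_rho_static_less_1
    unfolding rho_static_eq[symmetric] has_stationary_regime_def by blast
qed

end
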